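(* Let $n=6$, $j_0=1$ and $j_i=3$ for all $i\in\mathbb Z/(6)\setminus\{0\}$. Define $\sigma_{(i,j)}(k,l)=(k+j,\ l-j_{k+j-i})$ on $X=(\mathbb Z/(6))^2$ and $r((i,j),(k,l))=(\sigma_{(i,j)}(k,l),\sigma^{-1}_{\sigma_{(i,j)}(k,l)}(i,j))$. Then $(X,r)$ is an indecomposable and irretractable solution of the YBE which is not simple.
   Context: A solution of the YBE is a pair $(X,r)$, $X$ nonempty, $r:X\times X\to X\times X$, $r(x,y)=(\sigma_x(y),\gamma_y(x))$, with $r^2=\mathrm{id}$, all $\sigma_x,\gamma_x$ bijective, and $r_{12}r_{23}r_{12}=r_{23}r_{12}r_{23}$ on $X^3$. Indecomposable: $\langle\sigma_x\rangle\le \mathrm{Sym}_X$ transitive on $X$. Irretractable: $\sigma_x\ne\sigma_y$ for $x\ne y$. A homomorphism of solutions $f:(X,r)\to(Y,s)$ (with $s(t,z)=(\sigma'_t(z),\gamma'_z(t))$) is a map with $f(\sigma_x(y))=\sigma'_{f(x)}(f(y))$; $(X,r)$ is simple if $|X|>1$ and every surjective homomorphism of solutions $f:(X,r)\to(Y,s)$ is bijective or has $|Y|=1$. *)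

theory Defs
  imports Main "HOL-Library.Numeral_Type"
begin

definition ybe_sigma :: "('a \<times> 'a \<Rightarrow> 'a \<times> 'a) \<Rightarrow> 'a \<Rightarrow> 'a \<Rightarrow> 'a" where
  "ybe_sigma r x y = fst (r (x, y))"

definition ybe_gamma :: "('a \<times> 'a \<Rightarrow> 'a \<times> 'a) \<Rightarrow> 'a \<Rightarrow> 'a \<Rightarrow> 'a" where
  "ybe_gamma r y x = snd (r (x, y))"

definition r12 :: "('a \<times> 'a \<Rightarrow> 'a \<times> 'a) \<Rightarrow> 'a \<times> 'a \<times> 'a \<Rightarrow> 'a \<times> 'a \<times> 'a" where
  "r12 r = (\<lambda>(x, y, z). (let (a, b) = r (x, y) in (a, b, z)))"

definition r23 :: "('a \<times> 'a \<Rightarrow> 'a \<times> 'a) \<Rightarrow> 'a \<times> 'a \<times> 'a \<Rightarrow> 'a \<times> 'a \<times> 'a" where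
  "r23 r = (\<lambda>(x, y, z). (let (b, c) = r (y, z) in (x, b, c)))"

definition ybe_solution :: "'a set \<Rightarrow> ('a \<times> 'a \<Rightarrow> 'a \<times> 'a) \<Rightarrow> bool" where
  "ybe_solution X r \<longleftrightarrow>
     X \<noteq> {} \<and>
     (\<forall>x\<in>X. \<forall>y\<in>X. r (x, y) \<in> X \<times> X) \<and>
     (\<forall>x\<in>X. \<forall>y\<in>X. r (r (x, y)) = (x, y)) \<and>
     (\<forall>x\<in>X. bij_betw (ybe_sigma r x) X X \<and> bij_betw (ybe_gamma r x) X X) \<and>
     (\<forall>x\<in>X. \<forall>y\<in>X. \<forall>z\<in>X.
        r12 r (r23 r (r12 r (x, y, z))) = r23 r (r12 r (r23 r (x, y, z))))"

inductive_set sigma_group :: "'a set \<Rightarrow> ('a \<times> 'a \<Rightarrow> 'a \<times> 'a) \<Rightarrow> ('a \<Rightarrow> 'a) set"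
  for X r where
  sg_id: "id \<in> sigma_group X r"
| sg_sigma: "g \<in> sigma_group X r \<Longrightarrow> x \<in> X \<Longrightarrow> ybe_sigma r x \<circ> g \<in> sigma_group X r"
| sg_inv: "g \<in> sigma_group X r \<Longrightarrow> x \<in> X \<Longrightarrow> inv_into X (ybe_sigma r x) \<circ> g \<in> sigma_group X r"

definition indecomposable :: "'a set \<Rightarrow> ('a \<times> 'a \<Rightarrow> 'a \<times> 'a) \<Rightarrow> bool" where
  "indecomposable X r \<longleftrightarrow> (\<forall>x\<in>X. \<forall>y\<in>X. \<exists>g\<in>sigma_group X r. g x = y)"

definition irretractable :: "'a set \<Rightarrow> ('a \<times> 'a \<Rightarrow> 'a \<times> 'a) \<Rightarrow> bool" where
  "irretractable X r \<longleftrightarrow>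
     (\<forall>x\<in>X. \<forall>y\<in>X. x \<noteq> y \<longrightarrow> (\<exists>z\<in>X. ybe_sigma r x z \<noteq> ybe_sigma r y z))"

definition solution_hom ::
  "'a set \<Rightarrow> ('a \<times> 'a \<Rightarrow> 'a \<times> 'a) \<Rightarrow> 'b set \<Rightarrow> ('b \<times> 'b \<Rightarrow> 'b \<times> 'b) \<Rightarrow> ('a \<Rightarrow> 'b) \<Rightarrow> bool" where
  "solution_hom X r Y s f \<longleftrightarrow>
     f ` X \<subseteq> Y \<and>
     (\<forall>x\<in>X. \<forall>y\<in>X. f (ybe_sigma r x y) = ybe_sigma s (f x) (f y))"

text \<open>Target solutions range over carriers of the same type as X;
 this loses nothing, since the image of a surjection from X has cardinality at
 most that of X and can be transported into the type of X.\<close>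
definition simple_solution :: "'a set \<Rightarrow> ('a \<times> 'a \<Rightarrow> 'a \<times> 'a) \<Rightarrow> bool" where
  "simple_solution X r \<longleftrightarrow>
     (\<exists>x\<in>X. \<exists>y\<in>X. x \<noteq> y) \<and>
     (\<forall>(Y :: 'a set) s f. ybe_solution Y s \<and> solution_hom X r Y s f \<and> f ` X = Y \<longrightarrow>
        bij_betw f X Y \<or> (\<exists>a. Y = {a}))"

definition jj :: "6 \<Rightarrow> 6" where
  "jj t = (if t = 0 then 1 else 3)"

definition sig6 :: "6 \<times> 6 \<Rightarrow> 6 \<times> 6 \<Rightarrow> 6 \<times> 6" where
  "sig6 = (\<lambda>(i, j) (k, l). (k + j, l - jj (k + j - i)))"

definition r6 :: "(6 \<times> 6) \<times> (6 \<times> 6) \<Rightarrow> (6 \<times> 6) \<times> (6 \<times> 6)" where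
  "r6 = (\<lambda>(x, y). (sig6 x y, inv (sig6 (sig6 x y)) x))"

end

theory Submission
  imports Defs
begin

text \<open>Write r(x,y) = (sigma_x y, sigma'_(sigma_x y) x) with sigma' x the inverse of sigma x.
  Such an r is involutive, and the map Phi(x,y,z) = (x, sigma_x y, sigma_x (sigma_y z))
  conjugates r12 and r23 into transpositions of coordinates as soon as
  sigma_x sigma_y = sigma_(sigma_x y) sigma_(sigma'_(sigma_x y) x); so the braid relation reduces
  to this identity, which for the example is a direct computation in Z/(6).
  The group generated by the sigma_x contains (k,l) |-> (k,l-1) and (k,l) |-> (k+1,l-1),
  whence transitivity. The map (i,j) |-> (3i,3j) kills the dependence on j_t since
  3 j_t = 3 for all t, and so is a homomorphism onto a solution with four elements.\<close>

lemma r12_apply: "r12 r (x, y, z) = (fst (r (x, y)), snd (r (x, y)), z)"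
  by (simp add: r12_def split: prod.splits)

lemma r23_apply: "r23 r (x, y, z) = (x, fst (r (y, z)), snd (r (y, z)))"
  by (simp add: r23_def split: prod.splits)

lemma braid_of_sigma_law:
  fixes \<sigma> \<sigma>' :: "'a \<Rightarrow> 'a \<Rightarrow> 'a"
  assumes right_inv: "\<And>x y. \<sigma> x (\<sigma>' x y) = y"
    and left_inv: "\<And>x y. \<sigma>' x (\<sigma> x y) = y"
    and sigma_law: "\<And>x y z. \<sigma> x (\<sigma> y z) = \<sigma> (\<sigma> x y) (\<sigma> (\<sigma>' (\<sigma> x y) x) z)"
    and r_def: "r = (\<lambda>(x, y). (\<sigma> x y, \<sigma>' (\<sigma> x y) x))"
  shows "r12 r (r23 r (r12 r t)) = r23 r (r12 r (r23 r t))"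
proof -
  define \<Phi> where "\<Phi> = (\<lambda>(x, y, z). (x, \<sigma> x y, \<sigma> x (\<sigma> y z)))"
  have inj_\<Phi>: "inj \<Phi>"
  proof (rule injI)
    fix u v assume "\<Phi> u = \<Phi> v"
    then show "u = v" unfolding \<Phi>_def
      by (cases u; cases v; simp) (metis left_inv)
  qed
  have swap12: "\<Phi> (r12 r u) = (case \<Phi> u of (a, b, c) \<Rightarrow> (b, a, c))" for u
    by (cases u) (simp add: \<Phi>_def r12_apply r_def right_inv sigma_law[symmetric])
  have swap23: "\<Phi> (r23 r u) = (case \<Phi> u of (a, b, c) \<Rightarrow> (a, c, b))" for u
    by (cases u) (simp add: \<Phi>_def r23_apply r_def right_inv)
  have "\<Phi> (r12 r (r23 r (r12 r t))) = \<Phi> (r23 r (r12 r (r23 r t)))"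
    by (simp add: swap12 swap23 split: prod.splits)
  then show ?thesis
    using inj_\<Phi> by (simp add: inj_eq)
qed

lemma involutive_of_sigma:
  fixes \<sigma> \<sigma>' :: "'a \<Rightarrow> 'a \<Rightarrow> 'a"
  assumes "\<And>x y. \<sigma> x (\<sigma>' x y) = y" and "\<And>x y. \<sigma>' x (\<sigma> x y) = y"
    and "r = (\<lambda>(x, y). (\<sigma> x y, \<sigma>' (\<sigma> x y) x))"
  shows "r (r p) = p"
  using assms by (cases p) simp

definition orbit_rel :: "'a set \<Rightarrow> ('a \<times> 'a \<Rightarrow> 'a \<times> 'a) \<Rightarrow> 'a \<Rightarrow> 'a \<Rightarrow> bool" where
  "orbit_rel X r x y \<longleftrightarrow> (\<exists>g\<in>sigma_group X r. g x = y)"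

lemma orbit_rel_refl: "orbit_rel X r x x"
  unfolding orbit_rel_def by (rule bexI[OF _ sg_id]) simp

lemma orbit_rel_sigma:
  assumes "orbit_rel X r x y" and "z \<in> X"
  shows "orbit_rel X r x (ybe_sigma r z y)"
proof -
  obtain g where "g \<in> sigma_group X r" and "g x = y"
    using assms(1) unfolding orbit_rel_def by blast
  then show ?thesis
    unfolding orbit_rel_def by (intro bexI[OF _ sg_sigma[OF _ assms(2)]]) simp_all
qed

lemma not_simple_of_proper_quotient:
  fixes X Y :: "'a set"
  assumes "ybe_solution Y s" and "solution_hom X r Y s f" and "f ` X = Y"
    and "\<not> inj_on f X" and "a \<in> Y" and "b \<in> Y" and "a \<noteq> b"
  shows "\<not> simple_solution X r"
proof
  assume "simple_solution X r"
  then have "\<exists>c. Y = {c}"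
    using assms(1-4) unfolding simple_solution_def bij_betw_def by blast
  then show False
    using assms(5-7) by blast
qed

lemma six_eq_zero: "(6::6) = 0"
  by simp

lemma ex_of_nat_6: "\<exists>n. (of_nat n :: 6) = z"
proof (cases z rule: bit0_cases)
  case (of_int w)
  then have "(of_nat (nat w) :: 6) = z" by simp
  then show ?thesis by blast
qed

lemma jj_commute: "jj (a - b) = jj (b - a)"
  by (simp add: jj_def)

lemma three_mult_jj: "3 * jj t = 3"
  by (simp add: jj_def)

definition sig6_inv :: "6 \<times> 6 \<Rightarrow> 6 \<times> 6 \<Rightarrow> 6 \<times> 6" where
  "sig6_inv = (\<lambda>(i, j) (a, b). (a - j, b + jj (a - i)))"

lemma sig6_apply: "sig6 (i, j) (k, l) = (k + j, l - jj (k + j - i))"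
  by (simp add: sig6_def)

lemma sig6_inv_apply: "sig6_inv (i, j) (a, b) = (a - j, b + jj (a - i))"
  by (simp add: sig6_inv_def)

lemma sig6_sig6_inv: "sig6 x (sig6_inv x y) = y"
  by (cases x; cases y) (simp add: sig6_def sig6_inv_def)

lemma sig6_inv_sig6: "sig6_inv x (sig6 x y) = y"
  by (cases x; cases y) (simp add: sig6_def sig6_inv_def)

lemma bij_sig6: "bij (sig6 x)"
  by (metis bij_def injI surjI sig6_sig6_inv sig6_inv_sig6)

lemma r6_eq: "r6 = (\<lambda>(x, y). (sig6 x y, sig6_inv (sig6 x y) x))"
proof -
  have "inv (sig6 x) = sig6_inv x" for x
    by (rule inv_equality) (simp_all add: sig6_sig6_inv sig6_inv_sig6)
  then show ?thesis by (simp add: r6_def)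
qed

lemma ybe_sigma_r6: "ybe_sigma r6 x = sig6 x"
  by (rule ext) (simp add: ybe_sigma_def r6_eq)

lemma ybe_gamma_r6_apply:
  "ybe_gamma r6 (k, l) (a, b) = (a - l + jj (k + b - a), b + jj (k + b - a))"
  using jj_commute[of a "k + b"]
  by (simp add: ybe_gamma_def r6_eq sig6_apply sig6_inv_apply algebra_simps)

text \<open>Both sides send (m,n) to (m+l+j, n - j_(m+l-k) - j_(m+l+j-i)).\<close>
lemma sig6_law:
  "sig6 x (sig6 y z) = sig6 (sig6 x y) (sig6 (sig6_inv (sig6 x y) x) z)"
proof -
  obtain i j k l m n where xyz: "x = (i, j)" "y = (k, l)" "z = (m, n)"
    by (cases x; cases y; cases z)
  define t where "t = jj (k + j - i)"
  have xy: "sig6 x y = (k + j, l - t)"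
    by (simp add: xyz sig6_apply t_def)
  have xy_inv: "sig6_inv (k + j, l - t) x = (i - l + t, j + t)"
    using jj_commute[of i "k + j"] by (simp add: xyz sig6_inv_apply t_def algebra_simps)
  have "m + (j + t) - (i - l + t) = m + l + j - i"
    and "m + (j + t) + (l - t) = m + l + j" and "m + l + j - (k + j) = m + l - k"
    by (simp_all add: algebra_simps)
  then have "sig6 (sig6 x y) (sig6 (sig6_inv (sig6 x y) x) z)
      = (m + l + j, n - jj (m + l + j - i) - jj (m + l - k))"
    unfolding xy xy_inv by (simp only: xyz sig6_apply)
  moreover have "sig6 x (sig6 y z) = (m + l + j, n - jj (m + l - k) - jj (m + l + j - i))"
    by (simp add: xyz sig6_apply add.assoc add.commute[of j l])
  ultimately show ?thesis
    by (simp add: algebra_simps)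
qed

text \<open>From gamma_y (i,j) one reads off j - i, hence j_(k+j-i), hence (i,j).\<close>
lemma inj_ybe_gamma_r6: "inj (ybe_gamma r6 y)"
proof (rule injI)
  fix x x' assume eq: "ybe_gamma r6 y x = ybe_gamma r6 y x'"
  obtain i j i' j' k l where ijkl: "x = (i, j)" "x' = (i', j')" "y = (k, l)"
    by (cases x; cases x'; cases y)
  have e1: "i - l + jj (k + j - i) = i' - l + jj (k + j' - i')"
    and e2: "j + jj (k + j - i) = j' + jj (k + j' - i')"
    using eq by (simp_all add: ijkl ybe_gamma_r6_apply)
  have "j - i = (j + jj (k + j - i)) - (i - l + jj (k + j - i)) - l"
    by (simp add: algebra_simps)
  also have "\<dots> = j' - i'"
    by (simp only: e1 e2) (simp add: algebra_simps)
  finally have "k + j - i = k + j' - i'"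
    by (simp add: algebra_simps)
  then have "jj (k + j - i) = jj (k + j' - i')"
    by (rule arg_cong)
  then show "x = x'"
    using e1 e2 by (simp add: ijkl)
qed

lemma ybe_solution_r6: "ybe_solution (UNIV :: (6 \<times> 6) set) r6"
proof -
  have "bij (ybe_gamma r6 y)" for y
    using inj_ybe_gamma_r6 finite_UNIV_inj_surj[of "ybe_gamma r6 y"] by (simp add: bij_def)
  then show ?thesis
    unfolding ybe_solution_def
    using braid_of_sigma_law[OF sig6_sig6_inv sig6_inv_sig6 sig6_law r6_eq]
      involutive_of_sigma[OF sig6_sig6_inv sig6_inv_sig6 r6_eq]
    by (simp add: ybe_sigma_r6 bij_sig6)
qed

lemma orbit_rel_r6_down: "orbit_rel UNIV r6 x (k, l) \<Longrightarrow> orbit_rel UNIV r6 x (k, l - of_nat n)"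
proof (induction n)
  case (Suc n)
  have "sig6 (k, 0) (k, l - of_nat n) = (k, l - of_nat (Suc n))"
    by (simp add: sig6_apply jj_def algebra_simps)
  then show ?case
    using orbit_rel_sigma[OF Suc.IH[OF Suc.prems], of "(k, 0)"] by (simp add: ybe_sigma_r6)
qed simp

lemma orbit_rel_r6_diag:
  "orbit_rel UNIV r6 x (k, l) \<Longrightarrow> orbit_rel UNIV r6 x (k + of_nat n, l - of_nat n)"
proof (induction n)
  case (Suc n)
  have "sig6 (k + of_nat n + 1, 1) (k + of_nat n, l - of_nat n)
      = (k + of_nat (Suc n), l - of_nat (Suc n))"
    by (simp add: sig6_apply jj_def algebra_simps)
  then show ?case
    using orbit_rel_sigma[OF Suc.IH[OF Suc.prems], of "(k + of_nat n + 1, 1)"]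
    by (simp add: ybe_sigma_r6)
qed simp

lemma indecomposable_r6: "indecomposable UNIV r6"
  unfolding indecomposable_def orbit_rel_def[symmetric]
proof (intro ballI)
  fix x y :: "6 \<times> 6"
  obtain k l k' l' where kl: "x = (k, l)" "y = (k', l')"
    by (cases x; cases y)
  obtain n :: nat where n: "of_nat n = k' - k"
    using ex_of_nat_6 by blast
  obtain m :: nat where m: "of_nat m = l - of_nat n - l'"
    using ex_of_nat_6 by blast
  have "orbit_rel UNIV r6 x (k + of_nat n, l - of_nat n - of_nat m)"
    using orbit_rel_r6_down[OF orbit_rel_r6_diag[OF orbit_rel_refl[of _ _ x, unfolded kl(1)]]]
    by (simp add: kl)
  then show "orbit_rel UNIV r6 x y"
    by (simp add: n m kl)
qed

lemma irretractable_r6: "irretractable UNIV r6"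
  unfolding irretractable_def ybe_sigma_r6
proof (intro ballI impI)
  fix x y :: "6 \<times> 6" assume "x \<noteq> y"
  obtain i j i' j' where ij: "x = (i, j)" "y = (i', j')"
    by (cases x; cases y)
  show "\<exists>z\<in>UNIV. sig6 x z \<noteq> sig6 y z"
  proof (cases "j = j'")
    case False
    then show ?thesis
      by (intro bexI[of _ "(0, 0)"]) (simp_all add: ij sig6_apply)
  next
    case True
    with \<open>x \<noteq> y\<close> have "i - i' \<noteq> 0"
      by (simp add: ij)
    then have "sig6 x (i - j, 0) \<noteq> sig6 y (i - j, 0)"
      by (simp add: ij True sig6_apply jj_def)
    then show ?thesis by blast
  qed
qed

definition sig_quot :: "6 \<times> 6 \<Rightarrow> 6 \<times> 6 \<Rightarrow> 6 \<times> 6" where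
  "sig_quot = (\<lambda>(a, b) (c, d). (c + b, d + 3))"

definition sig_quot_inv :: "6 \<times> 6 \<Rightarrow> 6 \<times> 6 \<Rightarrow> 6 \<times> 6" where
  "sig_quot_inv = (\<lambda>(a, b) (c, d). (c - b, d - 3))"

definition r_quot :: "(6 \<times> 6) \<times> (6 \<times> 6) \<Rightarrow> (6 \<times> 6) \<times> (6 \<times> 6)" where
  "r_quot = (\<lambda>(x, y). (sig_quot x y, sig_quot_inv (sig_quot x y) x))"

definition triple :: "6 \<times> 6 \<Rightarrow> 6 \<times> 6" where
  "triple = (\<lambda>(a, b). (3 * a, 3 * b))"

lemma triple_apply: "triple (a, b) = (3 * a, 3 * b)"
  by (simp add: triple_def)

lemma range_tripleE:
  assumes "p \<in> range triple"
  obtains a b where "p = (3 * a, 3 * b)"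
  using assms by (auto simp: triple_def)

lemma sig_quot_sig_quot_inv: "sig_quot x (sig_quot_inv x y) = y"
  by (cases x; cases y) (simp add: sig_quot_def sig_quot_inv_def)

lemma sig_quot_inv_sig_quot: "sig_quot_inv x (sig_quot x y) = y"
  by (cases x; cases y) (simp add: sig_quot_def sig_quot_inv_def)

lemma sig_quot_law:
  "sig_quot x (sig_quot y z) = sig_quot (sig_quot x y) (sig_quot (sig_quot_inv (sig_quot x y) x) z)"
  by (cases x; cases y; cases z) (simp add: sig_quot_def sig_quot_inv_def algebra_simps)

lemma ybe_sigma_r_quot_apply: "ybe_sigma r_quot (3 * a, 3 * b) (c, d) = (c + 3 * b, d + 3)"
  by (simp add: ybe_sigma_def r_quot_def sig_quot_def)

lemma ybe_gamma_r_quot_apply: "ybe_gamma r_quot (c, 3 * d) (a, b) = (a - 3 * d - 3, b - 3)"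
  by (simp add: ybe_gamma_def r_quot_def sig_quot_def sig_quot_inv_def algebra_simps)

text \<open>On range triple every sigma_x and gamma_y is an involution.\<close>
lemma ybe_solution_r_quot: "ybe_solution (range triple) r_quot"
  unfolding ybe_solution_def
proof (intro conjI ballI)
  fix x y assume "x \<in> range triple" "y \<in> range triple"
  then obtain a b c d where xy: "x = (3 * a, 3 * b)" "y = (3 * c, 3 * d)"
    by (auto elim!: range_tripleE)
  have "r_quot (x, y) = (triple (c + b, d + 1), triple (a - d - 1, b - 1))"
    by (simp add: r_quot_def sig_quot_def sig_quot_inv_def xy triple_apply algebra_simps)
  then show "r_quot (x, y) \<in> range triple \<times> range triple"
    by simp
next
  fix x assume "x \<in> range triple"
  then obtain a b where x: "x = (3 * a, 3 * b)"
    by (auto elim!: range_tripleE)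
  have sigma_invol: "ybe_sigma r_quot x (ybe_sigma r_quot x p) = p" for p
    by (cases p) (simp add: x ybe_sigma_r_quot_apply, simp add: algebra_simps six_eq_zero)
  have sigma_closed: "ybe_sigma r_quot x p \<in> range triple" if p: "p \<in> range triple" for p
  proof -
    obtain c d where "p = (3 * c, 3 * d)"
      using p by (rule range_tripleE)
    then have "ybe_sigma r_quot x p = triple (c + b, d + 1)"
      by (simp add: x ybe_sigma_r_quot_apply triple_apply)
    then show ?thesis by simp
  qed
  show "bij_betw (ybe_sigma r_quot x) (range triple) (range triple)"
    by (intro bij_betw_byWitness[where f' = "ybe_sigma r_quot x"])
      (simp_all add: sigma_invol sigma_closed image_subset_iff)
next
  fix y assume "y \<in> range triple"
  then obtain c d where y: "y = (3 * c, 3 * d)"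
    by (auto elim!: range_tripleE)
  have gamma_invol: "ybe_gamma r_quot y (ybe_gamma r_quot y p) = p" for p
    by (cases p) (simp add: y ybe_gamma_r_quot_apply, simp add: algebra_simps six_eq_zero)
  have gamma_closed: "ybe_gamma r_quot y p \<in> range triple" if p: "p \<in> range triple" for p
  proof -
    obtain a b where "p = (3 * a, 3 * b)"
      using p by (rule range_tripleE)
    then have "ybe_gamma r_quot y p = triple (a - d - 1, b - 1)"
      by (simp add: y ybe_gamma_r_quot_apply triple_apply right_diff_distrib)
    then show ?thesis by simp
  qed
  show "bij_betw (ybe_gamma r_quot y) (range triple) (range triple)"
    by (intro bij_betw_byWitness[where f' = "ybe_gamma r_quot y"])
      (simp_all add: gamma_invol gamma_closed image_subset_iff)
qed (simp_all add: involutive_of_sigma[OF sig_quot_sig_quot_inv sig_quot_inv_sig_quot r_quot_def]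
    braid_of_sigma_law[OF sig_quot_sig_quot_inv sig_quot_inv_sig_quot sig_quot_law r_quot_def])

lemma solution_hom_triple: "solution_hom UNIV r6 (range triple) r_quot triple"
  unfolding solution_hom_def
proof (intro conjI ballI)
  fix x y :: "6 \<times> 6"
  obtain i j k l where ijkl: "x = (i, j)" "y = (k, l)"
    by (cases x; cases y)
  have "triple (ybe_sigma r6 x y) = (3 * k + 3 * j, 3 * l - 3 * jj (k + j - i))"
    by (simp add: ijkl ybe_sigma_r6 sig6_apply triple_apply algebra_simps)
  also have "\<dots> = ybe_sigma r_quot (triple x) (triple y)"
    by (simp only: ijkl triple_apply ybe_sigma_r_quot_apply three_mult_jj)
      (simp add: algebra_simps six_eq_zero)
  finally show "triple (ybe_sigma r6 x y) = ybe_sigma r_quot (triple x) (triple y)" .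
qed simp

lemma not_simple_r6: "\<not> simple_solution (UNIV :: (6 \<times> 6) set) r6"
proof (rule not_simple_of_proper_quotient[OF ybe_solution_r_quot solution_hom_triple refl])
  have "triple (0, 0) = triple (2, 0)" and "((0, 0) :: 6 \<times> 6) \<noteq> (2, 0)"
    by (simp_all add: triple_apply six_eq_zero)
  then show "\<not> inj_on triple UNIV"
    by (metis injD)
  show "triple (0, 0) \<in> range triple" and "triple (1, 0) \<in> range triple"
    by simp_all
  show "triple (0, 0) \<noteq> triple (1, 0)"
    by (simp add: triple_apply)
qed

theorem mainTheorem7:
  shows "ybe_solution (UNIV :: (6 \<times> 6) set) r6 \<and> indecomposable UNIV r6 \<and>
         irretractable UNIV r6 \<and> \<not> simple_solution UNIV r6"
  using ybe_solution_r6 indecomposable_r6 irretractable_r6 not_simple_r6 by blast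

end
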